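(* Let $\mu$ be a measure on the Borel subsets of $(0,\infty)$ with $\int_0^{\infty}\frac{\lambda}{\lambda^2 + 1} \,\mathrm{d}\mu(\lambda)< \infty$, let $\mathcal{R}=\{z\in\mathbb{C}:\Re(z)>0\}$, and define the analytic function $F_\mu:\mathcal{R}\to\mathbb{C}$ by $F_\mu(z)=\int_0^\infty\{e^{-\lambda z}-e^{-\lambda}\}\,\mathrm{d}\mu(\lambda)$. Then $\Phi=F_\mu$ satisfies: (a) for all $0<a<b<\infty$, $\lim_{y\to\pm\infty} e^{-\pi|y|}\int_a^b\left|\frac{\Phi(x+iy)}{x+iy}\right|\mathrm{d}x=0$; (b) for every $\eta>0$, $\sup_{x\ge\eta}\int_{-\infty}^\infty\left|\frac{\Phi(x+iy)}{x+iy}\right|e^{-\pi|y|}\,\mathrm{d}y<\infty$; (c) $\lim_{x\to\infty}\int_{-\infty}^\infty\left|\frac{\Phi(x+iy)}{x+iy}\right|e^{-\pi|y|}\,\mathrm{d}y=0$. *)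

theory Defs
  imports "HOL-Analysis.Analysis"
begin

definition F_mu :: "real measure \<Rightarrow> complex \<Rightarrow> complex" where
  "F_mu M z = (\<integral>l. (exp (- (complex_of_real l) * z) - complex_of_real (exp (- l))) \<partial>M)"

end

theory Submission
  imports Defs "HOL-Probability.Probability" "HOL-Real_Asymp.Real_Asymp"
begin

(* For Re z >= eta > 0 the kernel e^(-l z) - e^(-l) of F_mu, divided by z, is O(l) as l -> 0
   (z -> e^(-l z) is l-Lipschitz on the right half-plane) and O(1/l) as l -> oo; both are
   dominated by a multiple of l/(l^2+1). So |F_mu(z)/z| is bounded on every half-plane
   Re z >= eta, which with the integrability of e^(-pi|y|) gives (a) and (b). The kernel over z
   is also at most 2/|z|, so dominated convergence with the majorant 8 l/(l^2+1) makes
   |F_mu(z)/z| tend to 0 uniformly as Re z -> oo, which gives (c). *)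

definition F_kernel :: "real \<Rightarrow> complex \<Rightarrow> complex" where
  "F_kernel l z = exp (- complex_of_real l * z) - complex_of_real (exp (- l))"

lemma norm_F_kernel_le_Lipschitz:
  assumes "0 \<le> l" "0 \<le> Re z"
  shows "norm (F_kernel l z) \<le> l * norm (z - 1)"
proof -
  let ?f = "\<lambda>w. exp (- complex_of_real l * w)"
  have "norm (?f z - ?f 1) \<le> l * norm (z - 1)"
  proof (rule field_differentiable_bound[OF convex_halfspace_Re_ge[of 0]])
    fix w :: complex assume w: "w \<in> {w. 0 \<le> Re w}"
    show "(?f has_field_derivative - complex_of_real l * ?f w) (at w within {w. 0 \<le> Re w})"
      by (auto intro!: derivative_eq_intros)
    show "norm (- complex_of_real l * ?f w) \<le> l"
      using assms w by (simp add: norm_mult norm_exp_eq_Re mult_left_le)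
  qed (use assms in auto)
  then show ?thesis
    by (simp add: F_kernel_def flip: exp_of_real)
qed

lemma norm_F_kernel_le_exp:
  assumes "0 \<le> Re z"
  shows "norm (F_kernel l z) \<le> exp (- l * Re z) + exp (- l)"
  using norm_triangle_ineq4[of "exp (- complex_of_real l * z)" "complex_of_real (exp (- l))"]
  by (simp add: F_kernel_def norm_exp_eq_Re)

lemma exp_neg_le_inverse:
  fixes t :: real
  assumes "0 < t"
  shows "exp (- t) \<le> 1 / t"
proof -
  have "t \<le> exp t"
    using exp_ge_add_one_self[of t] by linarith
  then show ?thesis
    using assms by (simp add: exp_minus field_simps)
qed

lemma min_inverse_le_twice_div_sq_plus_one:
  fixes l :: real
  assumes "0 < l"
  shows "min l (1 / l) \<le> 2 * (l / (l\<^sup>2 + 1))"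
proof (cases "l \<le> 1")
  case True
  then have "l * (l\<^sup>2 + 1) \<le> l * 2"
    using assms by (intro mult_left_mono) (auto simp: power_le_one)
  then show ?thesis
    using assms by (simp add: min_def field_simps add_pos_nonneg)
next
  case False
  then show ?thesis
    using assms by (simp add: min_def field_simps power2_eq_square add_pos_nonneg)
qed

lemma norm_F_kernel_div_le_linear:
  assumes "0 \<le> l" "0 < \<eta>" "\<eta> \<le> Re z"
  shows "norm (F_kernel l z) / norm z \<le> (1 + 1 / \<eta>) * l"
proof -
  have z: "\<eta> \<le> norm z"
    using assms complex_Re_le_cmod[of z] by linarith
  then have "norm z \<noteq> 0"
    using assms by auto
  have "norm (F_kernel l z) / norm z \<le> l * (norm z + 1) / norm z"
    using norm_F_kernel_le_Lipschitz[of l z] norm_triangle_ineq4[of z 1] assms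
    by (intro divide_right_mono) (auto intro: order_trans mult_left_mono)
  also have "\<dots> = l * (1 + 1 / norm z)"
    using \<open>norm z \<noteq> 0\<close> by (simp add: field_simps)
  also have "\<dots> \<le> l * (1 + 1 / \<eta>)"
    using assms z by (intro mult_left_mono add_left_mono frac_le) auto
  finally show ?thesis
    by (simp add: mult.commute)
qed

lemma norm_F_kernel_div_le_inverse:
  assumes "0 < l" "0 < \<eta>" "\<eta> \<le> Re z"
  shows "norm (F_kernel l z) / norm z \<le> (1 + 1 / \<eta>) / \<eta> * (1 / l)"
proof -
  have z: "\<eta> \<le> norm z"
    using assms complex_Re_le_cmod[of z] by linarith
  have "norm (F_kernel l z) \<le> exp (- l * Re z) + exp (- l)"
    using assms by (intro norm_F_kernel_le_exp) auto
  also have "\<dots> \<le> exp (- l * \<eta>) + exp (- l)"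
    using assms by (simp add: mult_left_mono)
  also have "\<dots> \<le> 1 / (l * \<eta>) + 1 / l"
    using exp_neg_le_inverse[of "l * \<eta>"] exp_neg_le_inverse[of l] assms by simp
  finally have "norm (F_kernel l z) / norm z \<le> (1 / (l * \<eta>) + 1 / l) / \<eta>"
    using assms z by (intro frac_le) auto
  also have "\<dots> = (1 + 1 / \<eta>) / \<eta> * (1 / l)"
    using assms by (simp add: field_simps)
  finally show ?thesis .
qed

lemma norm_F_kernel_div_le:
  assumes l: "0 < l" and \<eta>: "0 < \<eta>" "\<eta> \<le> Re z"
  shows "norm (F_kernel l z) / norm z \<le> 2 * (1 + 1 / \<eta>)\<^sup>2 * (l / (l\<^sup>2 + 1))"
proof -
  have c: "1 + 1 / \<eta> \<le> (1 + 1 / \<eta>)\<^sup>2" "(1 + 1 / \<eta>) / \<eta> \<le> (1 + 1 / \<eta>)\<^sup>2"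
    using \<eta> by (simp_all add: power2_eq_square field_simps)
  have "norm (F_kernel l z) / norm z \<le> (1 + 1 / \<eta>) * l"
    using l \<eta> by (intro norm_F_kernel_div_le_linear) auto
  also have "\<dots> \<le> (1 + 1 / \<eta>)\<^sup>2 * l"
    using c l by (intro mult_right_mono) auto
  finally have small: "norm (F_kernel l z) / norm z \<le> (1 + 1 / \<eta>)\<^sup>2 * l" .
  have "norm (F_kernel l z) / norm z \<le> (1 + 1 / \<eta>) / \<eta> * (1 / l)"
    using l \<eta> by (rule norm_F_kernel_div_le_inverse)
  also have "\<dots> \<le> (1 + 1 / \<eta>)\<^sup>2 * (1 / l)"
    using c l by (intro mult_right_mono) auto
  finally have large: "norm (F_kernel l z) / norm z \<le> (1 + 1 / \<eta>)\<^sup>2 * (1 / l)" .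
  from small large
have "norm (F_kernel l z) / norm z \<le> (1 + 1 / \<eta>)\<^sup>2 * min l (1 / l)"
    by (simp add: min_def)
  also have "\<dots> \<le> (1 + 1 / \<eta>)\<^sup>2 * (2 * (l / (l\<^sup>2 + 1)))"
    using min_inverse_le_twice_div_sq_plus_one[OF l] by (intro mult_left_mono) auto
  finally show ?thesis
    by (simp add: mult_ac)
qed

lemma norm_F_mu_div_le_nn_integral:
  assumes "\<And>l. l \<in> space M \<Longrightarrow> norm (F_kernel l z) / norm z \<le> g l"
  shows "ennreal (norm (F_mu M z / z)) \<le> (\<integral>\<^sup>+ l. ennreal (g l) \<partial>M)"
proof (cases "integrable M (\<lambda>l. F_kernel l z)")
  case True
  then have "integrable M (\<lambda>l. F_kernel l z / z)"
    by simp
  have "ennreal (norm (F_mu M z / z)) = ennreal (norm (\<integral>l. F_kernel l z / z \<partial>M))"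
    by (simp add: F_mu_def F_kernel_def)
  also have "\<dots> \<le> (\<integral>\<^sup>+ l. ennreal (norm (F_kernel l z / z)) \<partial>M)"
    by (rule integral_norm_bound_ennreal) fact
  also have "\<dots> \<le> (\<integral>\<^sup>+ l. ennreal (g l) \<partial>M)"
    using assms by (intro nn_integral_mono ennreal_leI) (simp add: norm_divide)
  finally show ?thesis .
next
  case False
  then have "F_mu M z = 0"
    by (simp add: F_mu_def F_kernel_def not_integrable_integral_eq)
  then show ?thesis
    by simp
qed

lemma tendsto_nn_integral_min_at_top:
  fixes w :: "'a \<Rightarrow> real"
  assumes [measurable]: "w \<in> borel_measurable M"
    and finite: "(\<integral>\<^sup>+ x. ennreal (w x) \<partial>M) < \<infinity>"
  shows "((\<lambda>R. \<integral>\<^sup>+ x. ennreal (min (c / R) (w x)) \<partial>M) \<longlongrightarrow> 0) at_top"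
proof (rule tendsto_at_topI_sequentially)
  fix X :: "nat \<Rightarrow> real"
  assume X: "filterlim X at_top sequentially"
  have "(\<lambda>n. \<integral>\<^sup>+ x. ennreal (min (c / X n) (w x)) \<partial>M)
      \<longlonglongrightarrow> (\<integral>\<^sup>+ x. 0 \<partial>M)"
  proof (rule nn_integral_dominated_convergence[where w = "\<lambda>x. ennreal (w x)"])
    show "AE x in M. ennreal (min (c / X n) (w x)) \<le> ennreal (w x)" for n
      by (intro AE_I2 ennreal_leI) simp
    have "(\<lambda>n. c / X n) \<longlonglongrightarrow> 0"
      by (rule tendsto_divide_0[OF tendsto_const filterlim_at_top_imp_at_infinity[OF X]])
    then have "(\<lambda>n. ennreal (min (c / X n) (w x))) \<longlonglongrightarrow> ennreal (min 0 (w x))" for x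
      by (intro tendsto_ennrealI tendsto_min tendsto_const)
    then show "AE x in M. (\<lambda>n. ennreal (min (c / X n) (w x))) \<longlonglongrightarrow> 0"
      by (simp add: ennreal_neg)
  qed (use finite in auto)
  then show "(\<lambda>n. \<integral>\<^sup>+ x. ennreal (min (c / X n) (w x)) \<partial>M) \<longlonglongrightarrow> 0"
    by simp
qed

lemma nn_integral_exp_neg_abs_finite:
  fixes c :: real
  assumes "0 < c"
  shows "(\<integral>\<^sup>+ y. ennreal (exp (- c * \<bar>y\<bar>)) \<partial>lborel) < \<infinity>"
proof -
  let ?e = "\<lambda>y. ennreal (exp (- c * y)) * indicator {0..} y"
  have "1 = (\<integral>\<^sup>+ y. ennreal (exp (- y)) * indicator {0..} y \<partial>lborel)"
    using nn_intergal_power_times_exp_Ici[of 0] by simp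
  also have "\<dots> = c * integral\<^sup>N lborel ?e"
    using assms by (subst nn_integral_real_affine[where c = c and t = 0])
      (auto simp: zero_le_mult_iff indicator_def)
  finally have "1 = ennreal c * integral\<^sup>N lborel ?e" .
  then have e: "integral\<^sup>N lborel ?e < \<infinity>"
    using assms by (cases "integral\<^sup>N lborel ?e = \<infinity>") (auto simp: less_top ennreal_mult_top)
  have "(\<integral>\<^sup>+ y. ennreal (exp (- c * \<bar>y\<bar>)) \<partial>lborel) \<le> (\<integral>\<^sup>+ y. ?e y + ?e (- y) \<partial>lborel)"
    by (intro nn_integral_mono) (auto simp: indicator_def abs_if)
  also have "\<dots> = integral\<^sup>N lborel ?e + (\<integral>\<^sup>+ y. ?e (- y) \<partial>lborel)"
    by (intro nn_integral_add) auto
  also have "(\<integral>\<^sup>+ y. ?e (- y) \<partial>lborel) = integral\<^sup>N lborel ?e"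
    using nn_integral_real_affine[of ?e "-1" 0] by simp
  finally show ?thesis
    using e by (simp add: order_le_less_trans)
qed

lemma tendsto_ennreal_mult_bounded:
  assumes "(g \<longlongrightarrow> 0) F" "\<And>y. T y \<le> B" "B < \<infinity>"
  shows "((\<lambda>y. ennreal (g y) * T y) \<longlongrightarrow> 0) F"
proof (rule tendsto_sandwich[where f = "\<lambda>_. 0" and h = "\<lambda>y. ennreal (g y) * B"])
  have "((\<lambda>y. ennreal (g y) * B) \<longlongrightarrow> ennreal 0 * B) F"
    using assms by (intro tendsto_mult_ennreal tendsto_ennrealI) auto
  then show "((\<lambda>y. ennreal (g y) * B) \<longlongrightarrow> 0) F"
    by simp
qed (use assms in \<open>auto intro!: always_eventually mult_left_mono\<close>)

lemma nn_integral_mult_le_bound: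
  assumes "\<And>y. 0 \<le> f y" "\<And>y. ennreal (f y) \<le> C" "w \<in> borel_measurable M"
  shows "(\<integral>\<^sup>+ y. ennreal (f y * w y) \<partial>M) \<le> C * (\<integral>\<^sup>+ y. ennreal (w y) \<partial>M)"
proof -
  have "(\<integral>\<^sup>+ y. ennreal (f y * w y) \<partial>M) \<le> (\<integral>\<^sup>+ y. C * ennreal (w y) \<partial>M)"
    using assms by (intro nn_integral_mono) (simp add: ennreal_mult' mult_right_mono)
  also have "\<dots> = C * (\<integral>\<^sup>+ y. ennreal (w y) \<partial>M)"
    using assms by (intro nn_integral_cmult) auto
  finally show ?thesis .
qed

locale admissible_measure =
  fixes M :: "real measure"
  assumes space_M: "space M = {0<..}"
    and sets_M: "sets M = sets (restrict_space borel {0<..})"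
    and finite_weight: "(\<integral>\<^sup>+ l. ennreal (l / (l\<^sup>2 + 1)) \<partial>M) < \<infinity>"
begin

lemma borel_measurable_M: "f \<in> borel_measurable borel \<Longrightarrow> f \<in> borel_measurable M"
  using measurable_restrict_space1 measurable_cong_sets[OF sets_M refl] by blast

lemma nn_integral_cmult_weight:
  assumes "0 \<le> c"
  shows "(\<integral>\<^sup>+ l. ennreal (c * (l / (l\<^sup>2 + 1))) \<partial>M)
    = ennreal c * (\<integral>\<^sup>+ l. ennreal (l / (l\<^sup>2 + 1)) \<partial>M)"
proof -
  have "(\<integral>\<^sup>+ l. ennreal (c * (l / (l\<^sup>2 + 1))) \<partial>M) = (\<integral>\<^sup>+ l. ennreal c * ennreal (l / (l\<^sup>2 + 1)) \<partial>M)"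
    using assms space_M by (intro nn_integral_cong ennreal_mult) auto
  also have "\<dots> = ennreal c * (\<integral>\<^sup>+ l. ennreal (l / (l\<^sup>2 + 1)) \<partial>M)"
    by (intro nn_integral_cmult borel_measurable_M) measurable
  finally show ?thesis .
qed

lemma norm_F_mu_div_le_uniform:
  assumes "0 < \<eta>" "\<eta> \<le> Re z"
  shows "ennreal (norm (F_mu M z / z))
    \<le> ennreal (2 * (1 + 1 / \<eta>)\<^sup>2) * (\<integral>\<^sup>+ l. ennreal (l / (l\<^sup>2 + 1)) \<partial>M)"
proof -
  have "ennreal (norm (F_mu M z / z)) \<le> (\<integral>\<^sup>+ l. ennreal (2 * (1 + 1 / \<eta>)\<^sup>2 * (l / (l\<^sup>2 + 1))) \<partial>M)"
    using space_M assms by (intro norm_F_mu_div_le_nn_integral norm_F_kernel_div_le) auto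
  also have "\<dots> = ennreal (2 * (1 + 1 / \<eta>)\<^sup>2) * (\<integral>\<^sup>+ l. ennreal (l / (l\<^sup>2 + 1)) \<partial>M)"
    by (rule nn_integral_cmult_weight) simp
  finally show ?thesis .
qed

lemma norm_F_mu_div_le_tail:
  assumes "1 \<le> Re z" "0 < R" "R \<le> norm z"
  shows "ennreal (norm (F_mu M z / z)) \<le> (\<integral>\<^sup>+ l. ennreal (min (2 / R) (8 * (l / (l\<^sup>2 + 1)))) \<partial>M)"
proof (rule norm_F_mu_div_le_nn_integral)
  fix l assume "l \<in> space M"
  then have l: "0 < l"
    using space_M by auto
  have "norm (F_kernel l z) \<le> exp (- l * Re z) + exp (- l)"
    using assms by (intro norm_F_kernel_le_exp) auto
  also have "\<dots> \<le> 1 + 1"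
    using l assms by (intro add_mono) auto
  finally have "norm (F_kernel l z) / norm z \<le> 2 / R"
    using assms by (intro frac_le) auto
  moreover have "norm (F_kernel l z) / norm z \<le> 8 * (l / (l\<^sup>2 + 1))"
    using norm_F_kernel_div_le[OF l, of 1 z] assms by simp
  ultimately show "norm (F_kernel l z) / norm z \<le> min (2 / R) (8 * (l / (l\<^sup>2 + 1)))"
    by simp
qed

lemma tendsto_tail_bound_at_top:
  "((\<lambda>R. \<integral>\<^sup>+ l. ennreal (min (2 / R) (8 * (l / (l\<^sup>2 + 1)))) \<partial>M) \<longlongrightarrow> 0) at_top"
proof (rule tendsto_nn_integral_min_at_top)
  show "(\<lambda>l. 8 * (l / (l\<^sup>2 + 1))) \<in> borel_measurable M"
    by (intro borel_measurable_M) measurable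
  show "(\<integral>\<^sup>+ l. ennreal (8 * (l / (l\<^sup>2 + 1))) \<partial>M) < \<infinity>"
    using finite_weight nn_integral_cmult_weight[of 8] by (simp add: ennreal_mult_less_top)
qed

lemma F_mu_strip_integral_decay:
  assumes ab: "0 < a" "a < b"
    and exp_lim: "((\<lambda>y. exp (- pi * \<bar>y\<bar>)) \<longlongrightarrow> 0) F"
  shows "((\<lambda>y. ennreal (exp (- pi * \<bar>y\<bar>)) *
            (\<integral>\<^sup>+ x\<in>{a..b}. ennreal (norm (F_mu M (Complex x y) / Complex x y)) \<partial>lborel)) \<longlongrightarrow> 0) F"
proof (rule tendsto_ennreal_mult_bounded[OF exp_lim])
  let ?C = "ennreal (2 * (1 + 1 / a)\<^sup>2) * (\<integral>\<^sup>+ l. ennreal (l / (l\<^sup>2 + 1)) \<partial>M)"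
  fix y
  have "(\<integral>\<^sup>+ x\<in>{a..b}. ennreal (norm (F_mu M (Complex x y) / Complex x y)) \<partial>lborel)
      \<le> (\<integral>\<^sup>+ x. ?C * indicator {a..b} x \<partial>lborel)"
    using ab norm_F_mu_div_le_uniform[of a] by (intro nn_integral_mono) (auto simp: indicator_def)
  also have "\<dots> = ?C * ennreal (b - a)"
    using ab by (simp add: nn_integral_cmult_indicator)
  finally show "(\<integral>\<^sup>+ x\<in>{a..b}. ennreal (norm (F_mu M (Complex x y) / Complex x y)) \<partial>lborel)
      \<le> ?C * ennreal (b - a)" .
  show "?C * ennreal (b - a) < \<infinity>"
    using finite_weight by (simp add: ennreal_mult_less_top)
qed

lemma F_mu_weighted_integral_bounded:
  assumes "0 < \<eta>"
  shows "(SUP x\<in>{\<eta>..}. (\<integral>\<^sup>+ y. ennreal (norm (F_mu M (Complex x y) / Complex x y)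
            * exp (- pi * \<bar>y\<bar>)) \<partial>lborel)) < \<infinity>"
proof -
  let ?C = "ennreal (2 * (1 + 1 / \<eta>)\<^sup>2) * (\<integral>\<^sup>+ l. ennreal (l / (l\<^sup>2 + 1)) \<partial>M)"
  have "(SUP x\<in>{\<eta>..}. (\<integral>\<^sup>+ y. ennreal (norm (F_mu M (Complex x y) / Complex x y)
            * exp (- pi * \<bar>y\<bar>)) \<partial>lborel))
      \<le> ?C * (\<integral>\<^sup>+ y. ennreal (exp (- pi * \<bar>y\<bar>)) \<partial>lborel)"
    using assms by (intro SUP_least nn_integral_mult_le_bound norm_F_mu_div_le_uniform) auto
  also have "\<dots> < \<infinity>"
    using finite_weight nn_integral_exp_neg_abs_finite[OF pi_gt_zero]
    by (simp add: ennreal_mult_less_top)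
  finally show ?thesis .
qed

lemma F_mu_weighted_integral_tendsto_0:
  "((\<lambda>x. \<integral>\<^sup>+ y. ennreal (norm (F_mu M (Complex x y) / Complex x y)
      * exp (- pi * \<bar>y\<bar>)) \<partial>lborel) \<longlongrightarrow> 0) at_top"
proof -
  let ?tail = "\<lambda>R. \<integral>\<^sup>+ l. ennreal (min (2 / R) (8 * (l / (l\<^sup>2 + 1)))) \<partial>M"
  let ?E = "\<integral>\<^sup>+ y. ennreal (exp (- pi * \<bar>y\<bar>)) \<partial>lborel"
  have upper: "\<forall>\<^sub>F x in at_top. (\<integral>\<^sup>+ y. ennreal (norm (F_mu M (Complex x y) / Complex x y)
      * exp (- pi * \<bar>y\<bar>)) \<partial>lborel) \<le> ?tail x * ?E"
  proof (rule eventually_at_top_linorderI)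
    fix x :: real
    assume "1 \<le> x"
    moreover have "x \<le> norm (Complex x y)" for y
      using abs_Re_le_cmod[of "Complex x y"] by simp
    ultimately show "(\<integral>\<^sup>+ y. ennreal (norm (F_mu M (Complex x y) / Complex x y)
        * exp (- pi * \<bar>y\<bar>)) \<partial>lborel) \<le> ?tail x * ?E"
      by (intro nn_integral_mult_le_bound norm_F_mu_div_le_tail) auto
  qed
  have "((\<lambda>x. ?tail x * ?E) \<longlongrightarrow> 0 * ?E) at_top"
    using nn_integral_exp_neg_abs_finite[OF pi_gt_zero]
    by (intro tendsto_mult_ennreal tendsto_tail_bound_at_top tendsto_const) auto
  then have lim: "((\<lambda>x. ?tail x * ?E) \<longlongrightarrow> 0) at_top"
    by simp
  show ?thesis
    by (rule tendsto_sandwich[OF _ upper tendsto_const lim]) simp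
qed

end

theorem lemma5p1:
  fixes M :: "real measure"
  assumes space_M: "space M = {0<..}"
    and sets_M: "sets M = sets (restrict_space borel {0<..})"
    and finite_int: "(\<integral>\<^sup>+ l. ennreal (l / (l\<^sup>2 + 1)) \<partial>M) < \<infinity>"
  shows "(\<forall>a b. 0 < a \<and> a < b \<longrightarrow>
           ((\<lambda>y. ennreal (exp (- pi * \<bar>y\<bar>)) *
              (\<integral>\<^sup>+ x\<in>{a..b}. ennreal (norm (F_mu M (Complex x y) / Complex x y)) \<partial>lborel))
             \<longlongrightarrow> 0) at_top \<and>
           ((\<lambda>y. ennreal (exp (- pi * \<bar>y\<bar>)) *
              (\<integral>\<^sup>+ x\<in>{a..b}. ennreal (norm (F_mu M (Complex x y) / Complex x y)) \<partial>lborel))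
             \<longlongrightarrow> 0) at_bot)
    \<and> (\<forall>\<eta>>0. (SUP x\<in>{\<eta>..}. (\<integral>\<^sup>+ y. ennreal (norm (F_mu M (Complex x y) / Complex x y)
                   * exp (- pi * \<bar>y\<bar>)) \<partial>lborel)) < \<infinity>)
    \<and> (((\<lambda>x. \<integral>\<^sup>+ y. ennreal (norm (F_mu M (Complex x y) / Complex x y)
                   * exp (- pi * \<bar>y\<bar>)) \<partial>lborel) \<longlongrightarrow> 0) at_top)"
proof -
  interpret admissible_measure M
    using assms by unfold_locales
  have "((\<lambda>y. exp (- pi * \<bar>y\<bar>)) \<longlongrightarrow> 0) at_top" "((\<lambda>y. exp (- pi * \<bar>y\<bar>)) \<longlongrightarrow> 0) at_bot"
    by real_asymp+
  then show ?thesis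
    using F_mu_strip_integral_decay F_mu_weighted_integral_bounded F_mu_weighted_integral_tendsto_0
    by simp
qed

end
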